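(* Let $K$ be a finite simplicial complex, let $f\colon K\to\mathbb{R}$ be an injective filtration function, let $\sigma_1,\ldots,\sigma_k$ be $n$-dimensional simplices of $K$, and let $\pi\in S_k$ be an arbitrary permutation of $\{1,\ldots,k\}$. Assume that for some $\varepsilon>0$ we have $$f(\sigma_1)<f(\sigma_2)<\cdots<f(\sigma_k)<f(\sigma_1)+2\varepsilon.$$ Then there exists an injective filtration function $g$ on $K$ such that $\|f-g\|_\infty\le\varepsilon$ and $$g(\sigma_{\pi(1)})<g(\sigma_{\pi(2)})<\cdots<g(\sigma_{\pi(k)}).$$
   Context: A filtration function on a finite simplicial complex $K$ is a map $f\colon K\to\mathbb{R}$ such that $f(\sigma)\le f(\tau)$ whenever $\sigma$ is a face of $\tau$. For two functions $f,g\colon K\to\mathbb{R}$, $\|f-g\|_\infty=\max_{\sigma\in K}|f(\sigma)-g(\sigma)|$. *)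

theory Defs
  imports Complex_Main "HOL-Combinatorics.Permutations"
begin

definition simplicial_complex :: "'a set set \<Rightarrow> bool" where
  "simplicial_complex K \<longleftrightarrow> finite K \<and>
     (\<forall>\<sigma>\<in>K. finite \<sigma> \<and> \<sigma> \<noteq> {}) \<and>
     (\<forall>\<sigma>\<in>K. \<forall>\<tau>. \<tau> \<subseteq> \<sigma> \<and> \<tau> \<noteq> {} \<longrightarrow> \<tau> \<in> K)"

definition simplex_dim :: "'a set \<Rightarrow> nat" where
  "simplex_dim \<sigma> = card \<sigma> - 1"

definition filtration :: "'a set set \<Rightarrow> ('a set \<Rightarrow> real) \<Rightarrow> bool" where
  "filtration K f \<longleftrightarrow> (\<forall>\<sigma>\<in>K. \<forall>\<tau>\<in>K. \<sigma> \<subseteq> \<tau> \<longrightarrow> f \<sigma> \<le> f \<tau>)"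

definition sup_dist :: "'a set set \<Rightarrow> ('a set \<Rightarrow> real) \<Rightarrow> ('a set \<Rightarrow> real) \<Rightarrow> real" where
  "sup_dist K f g = Max ((\<lambda>\<sigma>. \<bar>f \<sigma> - g \<sigma>\<bar>) ` K)"

end

theory Submission
  imports Defs
begin

text \<open>Choose \<open>e < \<epsilon>\<close> at least half the width of the window \<open>[f(\<sigma> 1), f(\<sigma> k)]\<close>
  and move every filtration value towards the midpoint \<open>c\<close> of the window by at most \<open>e\<close>.
  This map is monotone, so the result is still a filtration, and it sends every \<open>f(\<sigma> i)\<close>
  to \<open>c\<close>.  Then add \<open>\<delta> \<cdot> r\<close>, where the integer rank \<open>r\<close> strictly increases along
  proper faces and lists the \<open>\<sigma>(\<pi> i)\<close> in the prescribed order, which is possible because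
  they all have the same dimension.  For all but finitely many small \<open>\<delta> > 0\<close> the sum is
  injective, and it stays within \<open>\<epsilon>\<close> of \<open>f\<close>.\<close>

lemma strict_mono_on_atLeastAtMost_SucI:
  fixes f :: "nat \<Rightarrow> 'a::order"
  assumes "\<And>i. i \<in> {m..<n} \<Longrightarrow> f i < f (Suc i)"
  shows "strict_mono_on {m..n} f"
proof (rule strict_mono_onI)
  fix i j assume "i \<in> {m..n}" "j \<in> {m..n}" "i < j"
  then show "f i < f j" using lift_Suc_mono_less_ivl[of "{m..<n}" f i j] assms by auto
qed

definition squeeze :: "real \<Rightarrow> real \<Rightarrow> real \<Rightarrow> real" where
  "squeeze c e x = max (x - e) (min c (x + e))"

lemma mono_squeeze: "mono (squeeze c e)"
  by (rule monoI) (auto simp: squeeze_def)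

lemma abs_squeeze_diff_le: "0 \<le> e \<Longrightarrow> \<bar>squeeze c e x - x\<bar> \<le> e"
  by (auto simp: squeeze_def)

lemma squeeze_eq_center: "\<bar>x - c\<bar> \<le> e \<Longrightarrow> squeeze c e x = c"
  by (auto simp: squeeze_def)

lemma filtration_comp_mono: "filtration K f \<Longrightarrow> mono \<phi> \<Longrightarrow> filtration K (\<phi> \<circ> f)"
  by (auto simp: filtration_def monoD)

lemma exists_filtration_collapsing:
  fixes f :: "'a set \<Rightarrow> real"
  assumes "filtration K f" "a \<le> b" "b < a + 2 * \<epsilon>" "\<forall>\<tau>\<in>S. a \<le> f \<tau> \<and> f \<tau> \<le> b"
  obtains h c e where "filtration K h" "0 \<le> e" "e < \<epsilon>" "\<And>\<tau>. \<bar>h \<tau> - f \<tau>\<bar> \<le> e"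
    and "\<And>\<tau>. \<tau> \<in> S \<Longrightarrow> h \<tau> = c"
proof -
  have "(b - a) / 2 < \<epsilon>" using assms(3) by (simp add: field_simps)
  then obtain e where e: "(b - a) / 2 \<le> e" "e < \<epsilon>" by (meson dense less_imp_le)
  have "0 \<le> e" using \<open>a \<le> b\<close> e(1) by (simp add: field_simps)
  define c where "c = (a + b) / 2"
  have squeeze_S: "squeeze c e (f \<tau>) = c" if "\<tau> \<in> S" for \<tau>
    using assms(4)[rule_format, OF that] e(1)
    by (intro squeeze_eq_center) (simp add: c_def abs_le_iff field_simps)
  show ?thesis
    by (rule that[of "squeeze c e \<circ> f" e c])
      (use filtration_comp_mono[OF assms(1) mono_squeeze] \<open>0 \<le> e\<close> e(2)
        abs_squeeze_diff_le squeeze_S in simp_all)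
qed

lemma sup_dist_le:
  assumes "finite K" "K \<noteq> {}" "\<And>\<tau>. \<tau> \<in> K \<Longrightarrow> \<bar>f \<tau> - g \<tau>\<bar> \<le> e"
  shows "sup_dist K f g \<le> e"
  using assms by (simp add: sup_dist_def)

lemma exists_inj_label_extending:
  fixes s :: "nat \<Rightarrow> 'a"
  assumes "finite K" "finite A" "inj_on s A" "s ` A \<subseteq> K"
  obtains t :: "'a \<Rightarrow> nat" where "inj_on t K" "\<And>j. j \<in> A \<Longrightarrow> t (s j) = j"
proof -
  obtain h :: "'a \<Rightarrow> nat" where h: "inj_on h K"
    using finite_imp_inj_to_nat_seg[OF \<open>finite K\<close>] by blast
  define t where "t \<tau> = (if \<tau> \<in> s ` A then the_inv_into A s \<tau> else Suc (Max A) + h \<tau>)" for \<tau>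
  have t_in: "t \<tau> \<in> A" if "\<tau> \<in> s ` A" for \<tau>
    using that the_inv_into_into[OF \<open>inj_on s A\<close>] by (simp add: t_def)
  have t_notin: "t \<tau> \<notin> A" if "\<tau> \<notin> s ` A" for \<tau>
    using that Max_ge[OF \<open>finite A\<close>] by (fastforce simp: t_def)
  have "inj_on t K"
  proof (rule inj_onI)
    fix x y assume xy: "x \<in> K" "y \<in> K" "t x = t y"
    show "x = y"
    proof (cases "x \<in> s ` A \<longleftrightarrow> y \<in> s ` A")
      case True
      then show ?thesis
        using xy h by (auto simp: t_def inj_on_eq_iff the_inv_into_f_f[OF \<open>inj_on s A\<close>])
    next
      case False
      then show ?thesis using xy(3) t_in t_notin by metis
    qed
  qed
  moreover have "t (s j) = j" if "j \<in> A" for j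
    using that the_inv_into_f_f[OF \<open>inj_on s A\<close>] by (simp add: t_def)
  ultimately show ?thesis by (rule that)
qed

text \<open>The rank is \<open>card \<tau> \<cdot> M + t \<tau>\<close>: the cardinality dominates, the label \<open>t\<close>
  (bounded by \<open>M\<close>) breaks ties.\<close>

lemma exists_face_rank:
  fixes K :: "'a set set" and s :: "nat \<Rightarrow> 'a set"
  assumes "finite K" "\<forall>\<tau>\<in>K. finite \<tau>" "finite A" "inj_on s A" "s ` A \<subseteq> K"
    and "\<forall>j\<in>A. card (s j) = m"
  obtains r :: "'a set \<Rightarrow> nat"
  where "inj_on r K" "\<And>x y. x \<in> K \<Longrightarrow> y \<in> K \<Longrightarrow> x \<subset> y \<Longrightarrow> r x < r y"
    and "strict_mono_on A (r \<circ> s)"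
proof -
  obtain t where t: "inj_on t K" "\<And>j. j \<in> A \<Longrightarrow> t (s j) = j"
    using exists_inj_label_extending assms(1,3-5) by blast
  define M where "M = Suc (Max (t ` K))"
  have t_less: "t \<tau> < M" if "\<tau> \<in> K" for \<tau>
    using that \<open>finite K\<close> by (simp add: M_def le_imp_less_Suc)
  define r where "r \<tau> = card \<tau> * M + t \<tau>" for \<tau>
  have "inj_on r K"
  proof (rule inj_onI)
    fix x y assume xy: "x \<in> K" "y \<in> K" "r x = r y"
    then have "r x mod M = r y mod M" by simp
    with xy(1,2) have "t x = t y" by (simp add: r_def t_less)
    with t(1) xy(1,2) show "x = y" by (simp add: inj_on_eq_iff)
  qed
  moreover have "r x < r y" if "x \<in> K" "y \<in> K" "x \<subset> y" for x y
  proof -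
    have "card x < card y" using that assms(2) by (simp add: psubset_card_mono)
    then have "Suc (card x) * M \<le> card y * M" by (intro mult_le_mono1) simp
    then show ?thesis using t_less[OF that(1)] by (simp add: r_def)
  qed
  moreover have "strict_mono_on A (r \<circ> s)"
    by (rule strict_mono_onI) (use assms(6) t(2) in \<open>simp add: r_def\<close>)
  ultimately show ?thesis by (rule that)
qed

text \<open>Adding \<open>\<delta> \<cdot> r\<close> creates a tie \<open>g x = g y\<close> only if \<open>\<delta>\<close> is the slope
  \<open>(h x - h y) / (r y - r x)\<close> of one of the finitely many pairs, so a generic
  small \<open>\<delta>\<close> works.\<close>

lemma exists_inj_filtration_perturbation:
  fixes r :: "'a set \<Rightarrow> nat"
  assumes "finite K" "filtration K h" "inj_on r K"
    and r_mono: "\<And>x y. x \<in> K \<Longrightarrow> y \<in> K \<Longrightarrow> x \<subset> y \<Longrightarrow> r x < r y"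
    and "\<eta> > 0"
  obtains g where "filtration K g" "inj_on g K" "\<And>\<tau>. \<tau> \<in> K \<Longrightarrow> \<bar>g \<tau> - h \<tau>\<bar> \<le> \<eta>"
    and "\<And>x y. x \<in> K \<Longrightarrow> y \<in> K \<Longrightarrow> h x = h y \<Longrightarrow> r x < r y \<Longrightarrow> g x < g y"
proof -
  define R where "R = Max (r ` K)"
  define D where "D = (\<lambda>(x, y). (h x - h y) / (real (r y) - real (r x))) ` (K \<times> K)"
  have "finite D" using \<open>finite K\<close> by (simp add: D_def)
  then have "infinite ({0<..<\<eta> / Suc R} - D)"
    using \<open>\<eta> > 0\<close> by (simp add: Diff_infinite_finite)
  then obtain \<delta> where "\<delta> \<in> {0<..<\<eta> / Suc R} - D"
    by (metis infinite_imp_nonempty ex_in_conv)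
  then have \<delta>: "0 < \<delta>" "\<delta> < \<eta> / Suc R" "\<delta> \<notin> D" by auto
  define g where "g \<tau> = h \<tau> + \<delta> * r \<tau>" for \<tau>
  have "filtration K g"
    unfolding filtration_def
  proof (intro ballI impI)
    fix x y assume xy: "x \<in> K" "y \<in> K" "x \<subseteq> y"
    then have "r x \<le> r y" using r_mono by (cases "x = y") (auto intro: less_imp_le)
    then show "g x \<le> g y"
      using xy \<open>filtration K h\<close> \<delta>(1) by (simp add: g_def filtration_def add_mono)
  qed
  moreover have "inj_on g K"
  proof (rule inj_onI, rule ccontr)
    fix x y assume xy: "x \<in> K" "y \<in> K" "g x = g y" "x \<noteq> y"
    then have "real (r y) - real (r x) \<noteq> 0" using \<open>inj_on r K\<close> by (auto simp: inj_on_eq_iff)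
    moreover have "h x - h y = \<delta> * (real (r y) - real (r x))"
      using xy(3) by (simp add: g_def algebra_simps)
    ultimately have "\<delta> = (h x - h y) / (real (r y) - real (r x))" by simp
    with xy(1,2) have "\<delta> \<in> D" by (force simp: D_def)
    with \<delta>(3) show False ..
  qed
  moreover have "\<bar>g \<tau> - h \<tau>\<bar> \<le> \<eta>" if "\<tau> \<in> K" for \<tau>
  proof -
    have "r \<tau> \<le> R" using that \<open>finite K\<close> by (simp add: R_def)
    then have "\<delta> * r \<tau> \<le> \<eta> / Suc R * Suc R"
      using \<delta>(1,2) by (intro mult_mono) auto
    then show ?thesis using \<delta>(1) by (simp add: g_def)
  qed
  moreover have "g x < g y" if "h x = h y" "r x < r y" for x y
    using that \<delta>(1) by (simp add: g_def)
  ultimately show ?thesis by (rule that)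
qed

lemma exists_inj_filtration_reordering:
  fixes K :: "'a set set" and f :: "'a set \<Rightarrow> real" and s :: "nat \<Rightarrow> 'a set"
  assumes "simplicial_complex K" "filtration K f"
    and "finite A" "inj_on s A" "s ` A \<subseteq> K" "\<forall>j\<in>A. simplex_dim (s j) = n"
    and "\<forall>j\<in>A. a \<le> f (s j) \<and> f (s j) \<le> b" "a \<le> b" "b < a + 2 * \<epsilon>"
  shows "\<exists>g. filtration K g \<and> inj_on g K \<and> (\<forall>\<tau>\<in>K. \<bar>f \<tau> - g \<tau>\<bar> \<le> \<epsilon>) \<and>
    strict_mono_on A (g \<circ> s)"
proof -
  from assms(1) have "finite K" "\<forall>\<tau>\<in>K. finite \<tau>" "\<forall>\<tau>\<in>K. \<tau> \<noteq> {}"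
    by (auto simp: simplicial_complex_def)
  obtain h c e where h: "filtration K h" "0 \<le> e" "e < \<epsilon>" "\<And>\<tau>. \<bar>h \<tau> - f \<tau>\<bar> \<le> e"
    and h_s: "\<And>\<tau>. \<tau> \<in> s ` A \<Longrightarrow> h \<tau> = c"
    using exists_filtration_collapsing[OF assms(2,8,9), of "s ` A"] assms(7) by (metis imageE)
  have "card (s j) = n + 1" if "j \<in> A" for j
  proof -
    have "s j \<in> K" using that assms(5) by blast
    then have "card (s j) \<noteq> 0" using \<open>\<forall>\<tau>\<in>K. finite \<tau>\<close> \<open>\<forall>\<tau>\<in>K. \<tau> \<noteq> {}\<close> by simp
    moreover have "simplex_dim (s j) = n" using that assms(6) by blast
    ultimately show ?thesis by (simp add: simplex_dim_def)
  qed
  then obtain r :: "'a set \<Rightarrow> nat" where r: "inj_on r K" "\<And>x y. x \<in> K \<Longrightarrow> y \<in> K \<Longrightarrow> x \<subset> y \<Longrightarrow> r x < r y"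
    and r_s: "strict_mono_on A (r \<circ> s)"
    using exists_face_rank[OF \<open>finite K\<close> \<open>\<forall>\<tau>\<in>K. finite \<tau>\<close> assms(3-5)] by blast
  obtain g where g: "filtration K g" "inj_on g K" "\<And>\<tau>. \<tau> \<in> K \<Longrightarrow> \<bar>g \<tau> - h \<tau>\<bar> \<le> \<epsilon> - e"
    and g_order: "\<And>x y. x \<in> K \<Longrightarrow> y \<in> K \<Longrightarrow> h x = h y \<Longrightarrow> r x < r y \<Longrightarrow> g x < g y"
    using exists_inj_filtration_perturbation[OF \<open>finite K\<close> h(1) r, of "\<epsilon> - e"] h(3) by auto
  have "\<bar>f \<tau> - g \<tau>\<bar> \<le> \<epsilon>" if "\<tau> \<in> K" for \<tau>
    using g(3)[OF that] h(4)[of \<tau>] by linarith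
  moreover have "strict_mono_on A (g \<circ> s)"
  proof (rule strict_mono_onI)
    fix i j assume ij: "i \<in> A" "j \<in> A" "i < j"
    then have "s i \<in> K" "s j \<in> K" using assms(5) by auto
    moreover have "h (s i) = h (s j)" using ij h_s by simp
    moreover have "r (s i) < r (s j)" using strict_mono_onD[OF r_s ij] by simp
    ultimately show "(g \<circ> s) i < (g \<circ> s) j" using g_order by simp
  qed
  ultimately show ?thesis using g(1,2) by blast
qed

theorem corollary2p2:
  fixes K :: "'a set set" and f :: "'a set \<Rightarrow> real"
    and \<sigma> :: "nat \<Rightarrow> 'a set" and k n :: nat and \<pi> :: "nat \<Rightarrow> nat" and \<epsilon> :: real
  assumes "simplicial_complex K"
    and "filtration K f" and "inj_on f K"
    and "k \<ge> 1"
    and "\<forall>i\<in>{1..k}. \<sigma> i \<in> K \<and> simplex_dim (\<sigma> i) = n"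
    and "\<pi> permutes {1..k}"
    and "\<epsilon> > 0"
    and "\<forall>i\<in>{1..<k}. f (\<sigma> i) < f (\<sigma> (i + 1))"
    and "f (\<sigma> k) < f (\<sigma> 1) + 2 * \<epsilon>"
  shows "\<exists>g. filtration K g \<and> inj_on g K \<and> sup_dist K f g \<le> \<epsilon> \<and>
             (\<forall>i\<in>{1..<k}. g (\<sigma> (\<pi> i)) < g (\<sigma> (\<pi> (i + 1))))"
proof -
  have \<pi>_in: "\<pi> j \<in> {1..k}" if "j \<in> {1..k}" for j
    using permutes_in_image[OF assms(6)] that by simp
  have f_\<sigma>_mono: "strict_mono_on {1..k} (f \<circ> \<sigma>)"
    using assms(8) by (intro strict_mono_on_atLeastAtMost_SucI) simp
  then have "inj_on \<sigma> {1..k}"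
    by (intro inj_on_imageI2[of f] strict_mono_on_imp_inj_on)
  then have "inj_on (\<sigma> \<circ> \<pi>) {1..k}"
    using assms(6) by (simp add: comp_inj_on permutes_inj_on permutes_image)
  have f_\<sigma>_bounds: "f (\<sigma> 1) \<le> f (\<sigma> j) \<and> f (\<sigma> j) \<le> f (\<sigma> k)" if "j \<in> {1..k}" for j
    using strict_mono_on_leD[OF f_\<sigma>_mono, of 1 j] strict_mono_on_leD[OF f_\<sigma>_mono, of j k] that
    by auto
  then have between: "\<forall>j\<in>{1..k}. f (\<sigma> 1) \<le> f ((\<sigma> \<circ> \<pi>) j) \<and> f ((\<sigma> \<circ> \<pi>) j) \<le> f (\<sigma> k)"
    using \<pi>_in by (simp del: atLeastAtMost_iff)
  have simplices: "(\<sigma> \<circ> \<pi>) ` {1..k} \<subseteq> K" "\<forall>j\<in>{1..k}. simplex_dim ((\<sigma> \<circ> \<pi>) j) = n"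
    using assms(5) \<pi>_in by (auto simp del: atLeastAtMost_iff)
  have "f (\<sigma> 1) \<le> f (\<sigma> k)" using f_\<sigma>_bounds[of k] assms(4) by simp
  then obtain g where g: "filtration K g" "inj_on g K" "\<forall>\<tau>\<in>K. \<bar>f \<tau> - g \<tau>\<bar> \<le> \<epsilon>"
    and g_\<sigma>\<pi>: "strict_mono_on {1..k} (g \<circ> (\<sigma> \<circ> \<pi>))"
    using exists_inj_filtration_reordering[OF assms(1,2) finite_atLeastAtMost
        \<open>inj_on (\<sigma> \<circ> \<pi>) {1..k}\<close> simplices between _ assms(9)] by blast
  have "finite K" using assms(1) by (simp add: simplicial_complex_def)
  have "sup_dist K f g \<le> \<epsilon>"
    using g(3) assms(4,5) by (intro sup_dist_le \<open>finite K\<close>) auto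
  moreover have "g (\<sigma> (\<pi> i)) < g (\<sigma> (\<pi> (i + 1)))" if "i \<in> {1..<k}" for i
    using that strict_mono_onD[OF g_\<sigma>\<pi>, of i "i + 1"] by simp
  ultimately show ?thesis using g(1,2) by blast
qed

end
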